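(* Let $n\ge 2$, $\lambda=(\lambda_1,\dots,\lambda_n)\in\mathbb{R}^n$, and let $x$ be a vertex of the tweaked Gelfand–Tsetlin polytope $\widetilde{GT}(\lambda)$. Then every coordinate of $x$ lies in the additive subgroup $\Gamma(\lambda)=\mathbb{Z}\lambda_1+\dots+\mathbb{Z}\lambda_n\subseteq\mathbb{R}$.
   Context: Tweaked patterns: with $y_{1,j}:=\lambda_j$, a tweaked Gelfand–Tsetlin pattern of type $\lambda$ is a real vector with the $n^2-2$ coordinates $y_{i,j}$ ($2\le i\le n$, $i\le j\le n$), $z_{i,j}$ ($1\le i\le n-2$, $i\le j\le n-2$), $z^\uparrow_{i,n-1},z^\downarrow_{i,n-1}$ ($1\le i\le n-2$), $z_{n-1,n-1}$, satisfying: (T1) for $1\le i\le n-2$, $i\le j\le n-2$: $z_{i,j}\le y_{i,j}$, $z_{i,j}\ge y_{i,j+1}$, $z_{i,j}\ge y_{i+1,j+1}$, and $z_{i,j}\le y_{i+1,j}$ if $j\ge i+1$; (T2) for $1\le i\le n-2$: $\max\{y_{i,n},y_{i+1,n}\}\le z^\uparrow_{i,n-1}\le y_{i,n-1}$, $z^\uparrow_{i,n-1}\le y_{i,n-1}+y_{i,n}+y_{i+1,n}$, $\max\{y_{i,n},y_{i+1,n}\}\le z^\downarrow_{i,n-1}\le y_{i+1,n-1}$, $z^\downarrow_{i,n-1}\le y_{i+1,n-1}+y_{i,n}+y_{i+1,n}$, and $y_{i,n-1}-y_{i+1,n-1}=z^\uparrow_{i,n-1}-z^\downarrow_{i,n-1}$;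 (T3) $\max\{y_{n-1,n},y_{n,n}\}\le z_{n-1,n-1}\le y_{n-1,n-1}$ and $z_{n-1,n-1}\le y_{n-1,n-1}+y_{n-1,n}+y_{n,n}$. $\widetilde{GT}(\lambda)\subseteq\mathbb{R}^{n^2-2}$ is the set of all tweaked patterns of type $\lambda$ (a polyhedron; the claim concerns its vertices). *)

theory Defs
  imports Main "HOL-Analysis.Analysis"
begin

text \<open>Coordinates of a tweaked Gelfand-Tsetlin pattern:
  Y i j = y_{i,j} (2 \<le> i \<le> n, i \<le> j \<le> n),
  Z i j = z_{i,j} (1 \<le> i \<le> n-2, i \<le> j \<le> n-2),
  Zup i = z^up_{i,n-1}, Zdn i = z^down_{i,n-1} (1 \<le> i \<le> n-2),
  Zlast = z_{n-1,n-1}.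
  A point is a function from coordinates to reals that vanishes outside the
  n^2-2 valid coordinates, so the space of points is identified with R^(n^2-2).
  The type lambda is a function nat => real, only lam 1, ..., lam n matter.\<close>

datatype coord = Y nat nat | Z nat nat | Zup nat | Zdn nat | Zlast

definition valid_coord :: "nat \<Rightarrow> coord \<Rightarrow> bool" where
  "valid_coord n c = (case c of
      Y i j \<Rightarrow> 2 \<le> i \<and> i \<le> n \<and> i \<le> j \<and> j \<le> n
    | Z i j \<Rightarrow> 1 \<le> i \<and> i \<le> n - 2 \<and> i \<le> j \<and> j \<le> n - 2
    | Zup i \<Rightarrow> 1 \<le> i \<and> i \<le> n - 2
    | Zdn i \<Rightarrow> 1 \<le> i \<and> i \<le> n - 2
    | Zlast \<Rightarrow> True)"

definition yv :: "(nat \<Rightarrow> real) \<Rightarrow> (coord \<Rightarrow> real) \<Rightarrow> nat \<Rightarrow> nat \<Rightarrow> real" where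
  "yv lam x i j = (if i = 1 then lam j else x (Y i j))"

definition tweaked_GT :: "nat \<Rightarrow> (nat \<Rightarrow> real) \<Rightarrow> (coord \<Rightarrow> real) set" where
  "tweaked_GT n lam = {x.
     (\<forall>c. \<not> valid_coord n c \<longrightarrow> x c = 0) \<and>
     \<comment> \<open>(T1)\<close>
     (\<forall>i j. 1 \<le> i \<and> i \<le> n - 2 \<and> i \<le> j \<and> j \<le> n - 2 \<longrightarrow>
        x (Z i j) \<le> yv lam x i j \<and>
        x (Z i j) \<ge> yv lam x i (j + 1) \<and>
        x (Z i j) \<ge> yv lam x (i + 1) (j + 1) \<and>
        (j \<ge> i + 1 \<longrightarrow> x (Z i j) \<le> yv lam x (i + 1) j)) \<and>
     \<comment> \<open>(T2)\<close>
     (\<forall>i. 1 \<le> i \<and> i \<le> n - 2 \<longrightarrow>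
        max (yv lam x i n) (yv lam x (i + 1) n) \<le> x (Zup i) \<and>
        x (Zup i) \<le> yv lam x i (n - 1) \<and>
        x (Zup i) \<le> yv lam x i (n - 1) + yv lam x i n + yv lam x (i + 1) n \<and>
        max (yv lam x i n) (yv lam x (i + 1) n) \<le> x (Zdn i) \<and>
        x (Zdn i) \<le> yv lam x (i + 1) (n - 1) \<and>
        x (Zdn i) \<le> yv lam x (i + 1) (n - 1) + yv lam x i n + yv lam x (i + 1) n \<and>
        yv lam x i (n - 1) - yv lam x (i + 1) (n - 1) = x (Zup i) - x (Zdn i)) \<and>
     \<comment> \<open>(T3)\<close>
     max (yv lam x (n - 1) n) (yv lam x n n) \<le> x Zlast \<and>
     x Zlast \<le> yv lam x (n - 1) (n - 1) \<and>
     x Zlast \<le> yv lam x (n - 1) (n - 1) + yv lam x (n - 1) n + yv lam x n n}"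

definition is_vertex :: "(coord \<Rightarrow> real) set \<Rightarrow> (coord \<Rightarrow> real) \<Rightarrow> bool" where
  "is_vertex P x \<longleftrightarrow> x \<in> P \<and>
     \<not> (\<exists>a\<in>P. \<exists>b\<in>P. a \<noteq> b \<and> (\<exists>t::real. 0 < t \<and> t < 1 \<and>
           x = (\<lambda>c. (1 - t) * a c + t * b c)))"

definition Gamma_lat :: "nat \<Rightarrow> (nat \<Rightarrow> real) \<Rightarrow> real set" where
  "Gamma_lat n lam = {r. \<exists>k :: nat \<Rightarrow> int. r = (\<Sum>j=1..n. of_int (k j) * lam j)}"

end

theory Submission
  imports Defs
begin

text \<open>If a vertex x had a coordinate r outside \<open>\<Gamma>(\<lambda>)\<close>, let g be the odd function with
  g(\<plusminus>r) = \<plusminus>1 that vanishes elsewhere. As \<open>\<Gamma>(\<lambda>) = -\<Gamma>(\<lambda>)\<close> does not contain r, g vanishes on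
  \<open>\<Gamma>(\<lambda>)\<close>; in particular the fixed first row \<open>\<lambda>\<close> does not move when every coordinate u is
  shifted by \<open>\<epsilon> g(u)\<close>, and tight two-term inequalities of (T1) stay tight. The three-term
  constraints of (T2) and (T3) are not preserved by such a shift, since g is not additive, so there
  the shift of \<open>z\<^sup>\<up>\<close> (and of \<open>z\<^sup>\<down>\<close>, tied to it by the equation of (T2)) is chosen according to
  which inequality of its block is tight; oddness of g makes these choices consistent. Finitely many
  values occur, so all slack constraints have slack bounded away from 0 and \<open>x \<plusminus> \<epsilon>\<cdot>shift\<close> stays in
  the polytope for small \<open>\<epsilon>\<close>. At a suitably chosen off-lattice coordinate the shift is 1, so x
  is the midpoint of two distinct points of the polytope.\<close>

lemma Gamma_lat_zero: "0 \<in> Gamma_lat n lam"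
  unfolding Gamma_lat_def by (intro CollectI exI[of _ "\<lambda>_. 0"]) simp

lemma Gamma_lat_lam:
  assumes "1 \<le> j" "j \<le> n"
  shows "lam j \<in> Gamma_lat n lam"
proof -
  have "(\<Sum>i=1..n. of_int (if i = j then 1 else 0) * lam i) = (\<Sum>i=1..n. if i = j then lam i else 0)"
    by (rule sum.cong) auto
  also have "\<dots> = lam j"
    using assms by (simp add: sum.delta)
  finally show ?thesis
    unfolding Gamma_lat_def by (intro CollectI exI[of _ "\<lambda>i. if i = j then 1 else 0"]) simp
qed

lemma Gamma_lat_add:
  assumes "u \<in> Gamma_lat n lam" "v \<in> Gamma_lat n lam"
  shows "u + v \<in> Gamma_lat n lam"
proof -
  obtain k l where "u = (\<Sum>j=1..n. of_int (k j) * lam j)" "v = (\<Sum>j=1..n. of_int (l j) * lam j)"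
    using assms unfolding Gamma_lat_def by auto
  then have "u + v = (\<Sum>j=1..n. of_int (k j + l j) * lam j)"
    by (simp add: sum.distrib distrib_right)
  then show ?thesis
    unfolding Gamma_lat_def mem_Collect_eq by (rule exI[of _ "\<lambda>j. k j + l j"])
qed

lemma Gamma_lat_uminus:
  assumes "u \<in> Gamma_lat n lam"
  shows "- u \<in> Gamma_lat n lam"
proof -
  obtain k where "u = (\<Sum>j=1..n. of_int (k j) * lam j)"
    using assms unfolding Gamma_lat_def by auto
  then have "- u = (\<Sum>j=1..n. of_int (- k j) * lam j)"
    by (simp add: sum_negf)
  then show ?thesis
    unfolding Gamma_lat_def mem_Collect_eq by (rule exI[of _ "\<lambda>j. - k j"])
qed

lemma Gamma_lat_diff:
  "u \<in> Gamma_lat n lam \<Longrightarrow> v \<in> Gamma_lat n lam \<Longrightarrow> u - v \<in> Gamma_lat n lam"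
  using Gamma_lat_add[of u n lam "- v"] Gamma_lat_uminus[of v n lam] by simp

definition pm_indicator :: "real \<Rightarrow> real \<Rightarrow> real" where
  "pm_indicator r u = (if u = r then 1 else if u = - r then -1 else 0)"

lemma pm_indicator_uminus: "r \<noteq> 0 \<Longrightarrow> pm_indicator r (- u) = - pm_indicator r u"
  unfolding pm_indicator_def by auto

lemma abs_pm_indicator_le: "\<bar>pm_indicator r u\<bar> \<le> 1"
  unfolding pm_indicator_def by auto

definition sum3_gap :: "real \<Rightarrow> real set \<Rightarrow> bool" where
  "sum3_gap \<delta> V \<longleftrightarrow> (\<forall>A\<in>V. \<forall>B\<in>V. \<forall>C\<in>V. \<forall>D\<in>V. A < B + C + D \<longrightarrow> A + \<delta> \<le> B + C + D)"

lemma sum3_gap_exists: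
  assumes "finite V"
  shows "\<exists>\<delta>>0. sum3_gap \<delta> V"
proof -
  let ?W = "(\<lambda>(A, B, C, D). B + C + D - A) ` (V \<times> V \<times> V \<times> V)"
  have "finite ?W"
    using assms by simp
  then obtain \<delta> :: real where "\<delta> > 0" and \<delta>: "\<forall>w\<in>?W. w \<noteq> 0 \<longrightarrow> \<delta> \<le> dist 0 w"
    using finite_set_avoid by blast
  have "A + \<delta> \<le> B + C + D"
    if "A \<in> V" "B \<in> V" "C \<in> V" "D \<in> V" "A < B + C + D" for A B C D
    using \<delta> that by (force simp: dist_real_def)
  then show ?thesis
    unfolding sum3_gap_def using \<open>\<delta> > 0\<close> by blast
qed

lemma sum3_gap_perturb:
  assumes "sum3_gap \<delta> V" "A \<in> V" "B \<in> V" "C \<in> V" "D \<in> V" "A \<le> B + C + D"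
    and "A = B + C + D \<Longrightarrow> dA = dB + dC + dD"
    and "\<bar>dA\<bar> \<le> 5" "\<bar>dB\<bar> \<le> 5" "\<bar>dC\<bar> \<le> 5" "\<bar>dD\<bar> \<le> 5" "\<bar>e\<bar> \<le> \<delta> / 20"
  shows "A + e * dA \<le> (B + e * dB) + (C + e * dC) + (D + e * dD)"
proof (cases "A = B + C + D")
  case True
  then show ?thesis
    using assms(7) by (simp add: algebra_simps)
next
  case False
  then have gap: "A + \<delta> \<le> B + C + D"
    using assms(1-6) unfolding sum3_gap_def by auto
  have "\<bar>e * (dB + dC + dD - dA)\<bar> \<le> \<delta> / 20 * 20"
    unfolding abs_mult using assms(8-12) by (intro mult_mono) auto
  then show ?thesis
    using gap by (simp add: algebra_simps abs_le_iff)
qed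

lemma sum3_gap_perturb_le:
  assumes "sum3_gap \<delta> V" "A \<in> V" "B \<in> V" "0 \<in> V" "A \<le> B"
    and "A = B \<Longrightarrow> dA = dB"
    and "\<bar>dA\<bar> \<le> 5" "\<bar>dB\<bar> \<le> 5" "\<bar>e\<bar> \<le> \<delta> / 20"
  shows "A + e * dA \<le> B + e * dB"
proof -
  have "A + e * dA \<le> (B + e * dB) + (0 + e * 0) + (0 + e * 0)"
    by (rule sum3_gap_perturb[OF assms(1-4,4)]) (use assms(5-9) in auto)
  then show ?thesis
    by simp
qed

text \<open>The constraints of (T2) for one i, with s, t standing for \<open>z\<^sup>\<up>\<^sub>i\<^sub>,\<^sub>n\<^sub>-\<^sub>1, z\<^sup>\<down>\<^sub>i\<^sub>,\<^sub>n\<^sub>-\<^sub>1\<close>,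
  a, b for \<open>y\<^sub>i\<^sub>,\<^sub>n, y\<^sub>i\<^sub>+\<^sub>1\<^sub>,\<^sub>n\<close> and p, q for \<open>y\<^sub>i\<^sub>,\<^sub>n\<^sub>-\<^sub>1, y\<^sub>i\<^sub>+\<^sub>1\<^sub>,\<^sub>n\<^sub>-\<^sub>1\<close>;
  (T3) is the case t = s, q = p.\<close>
definition block_ok :: "real \<Rightarrow> real \<Rightarrow> real \<Rightarrow> real \<Rightarrow> real \<Rightarrow> real \<Rightarrow> bool" where
  "block_ok s t a b p q \<longleftrightarrow>
     max a b \<le> s \<and> s \<le> p \<and> s \<le> p + a + b \<and>
     max a b \<le> t \<and> t \<le> q \<and> t \<le> q + a + b \<and> p - q = s - t"

text \<open>The shift of s when a, b, p, q are shifted by g; the equation p - q = s - t then forces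
  the shift of t to be that of s minus g p plus g q. When an inequality of the block is tight, the
  shift is the one keeping it tight, which is consistent for odd g (lemma block_shift_tight).\<close>
definition block_shift ::
    "(real \<Rightarrow> real) \<Rightarrow> real \<Rightarrow> real \<Rightarrow> real \<Rightarrow> real \<Rightarrow> real \<Rightarrow> real \<Rightarrow> real" where
  "block_shift g s t a b p q =
     (if s = a then g a else if s = b then g b else if s = p then g p
      else if s = p + a + b then g p + g a + g b
      else if t = a then g a + g p - g q else if t = b then g b + g p - g q
      else g s)"

lemma abs_block_shift_le:
  assumes "\<And>u. \<bar>g u\<bar> \<le> 1"
  shows "\<bar>block_shift g s t a b p q\<bar> \<le> 3"
proof -
  have "\<bar>g u + g v + g w\<bar> \<le> 3" "\<bar>g u + g v - g w\<bar> \<le> 3" "\<bar>g u\<bar> \<le> 3" for u v w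
    using assms[of u] assms[of v] assms[of w] by linarith+
  then show ?thesis
    unfolding block_shift_def by simp
qed

lemma block_shift_tight:
  assumes odd: "\<And>u. g (- u) = - g u" and "block_ok s t a b p q"
  defines "ds \<equiv> block_shift g s t a b p q"
    and "dt \<equiv> block_shift g s t a b p q - g p + g q"
  shows "(s = a \<longrightarrow> ds = g a) \<and> (s = b \<longrightarrow> ds = g b) \<and> (s = p \<longrightarrow> ds = g p) \<and>
         (s = p + a + b \<longrightarrow> ds = g p + g a + g b) \<and>
         (t = a \<longrightarrow> dt = g a) \<and> (t = b \<longrightarrow> dt = g b) \<and> (t = q \<longrightarrow> dt = g q) \<and>
         (t = q + a + b \<longrightarrow> dt = g q + g a + g b)"
proof -
  have cancel: "g u + g v = 0" if "u + v = 0" for u v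
    using odd[of v] that by (simp add: eq_neg_iff_add_eq_0[symmetric])
  show ?thesis
    using assms(2) cancel[of p b] cancel[of p a] cancel[of a b] cancel[of q b] cancel[of q a]
    unfolding ds_def dt_def block_shift_def block_ok_def by (smt (verit))
qed

lemma block_ok_perturb:
  assumes gap: "sum3_gap \<delta> V" and V: "s \<in> V" "t \<in> V" "a \<in> V" "b \<in> V" "p \<in> V" "q \<in> V" "0 \<in> V"
    and blk: "block_ok s t a b p q"
    and odd: "\<And>u. g (- u) = - g u" and g_le: "\<And>u. \<bar>g u\<bar> \<le> 1" and e: "\<bar>e\<bar> \<le> \<delta> / 20"
  defines "ds \<equiv> block_shift g s t a b p q"
    and "dt \<equiv> block_shift g s t a b p q - g p + g q"
  shows "block_ok (s + e * ds) (t + e * dt) (a + e * g a) (b + e * g b) (p + e * g p) (q + e * g q)"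
proof -
  note tight = block_shift_tight[where g = g, OF odd blk, folded ds_def dt_def]
  have "\<bar>ds\<bar> \<le> 3"
    unfolding ds_def by (rule abs_block_shift_le[OF g_le])
  then have bounds: "\<bar>ds\<bar> \<le> 5" "\<bar>dt\<bar> \<le> 5" "\<bar>g u\<bar> \<le> 5" for u
    using g_le[of u] g_le[of p] g_le[of q] unfolding dt_def ds_def[symmetric] by linarith+
  have h: "a \<le> s" "b \<le> s" "s \<le> p" "s \<le> p + a + b" "a \<le> t" "b \<le> t" "t \<le> q" "t \<le> q + a + b"
    "p - q = s - t"
    using blk unfolding block_ok_def by auto
  have "a + e * g a \<le> s + e * ds" "b + e * g b \<le> s + e * ds" "s + e * ds \<le> p + e * g p"
    "a + e * g a \<le> t + e * dt" "b + e * g b \<le> t + e * dt" "t + e * dt \<le> q + e * g q"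
    using sum3_gap_perturb_le[OF gap _ _ V(7)] V h tight bounds e by auto
  moreover have "s + e * ds \<le> (p + e * g p) + (a + e * g a) + (b + e * g b)"
    "t + e * dt \<le> (q + e * g q) + (a + e * g a) + (b + e * g b)"
    using sum3_gap_perturb[OF gap] V h tight bounds e by auto
  moreover have "(p + e * g p) - (q + e * g q) = (s + e * ds) - (t + e * dt)"
    using h(9) unfolding dt_def ds_def by (simp add: algebra_simps)
  ultimately show ?thesis
    unfolding block_ok_def by simp
qed

lemma block_shift_off_lattice:
  assumes "a \<in> Gamma_lat n lam" "b \<in> Gamma_lat n lam" "p \<in> Gamma_lat n lam" "q \<in> Gamma_lat n lam"
    and "s \<notin> Gamma_lat n lam" and "p - q = s - t"
  shows "block_shift g s t a b p q = g s"
proof -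
  have "p + a + b \<in> Gamma_lat n lam" "a + p - q \<in> Gamma_lat n lam" "b + p - q \<in> Gamma_lat n lam"
    using assms(1-4) by (auto intro: Gamma_lat_add Gamma_lat_diff)
  moreover have "t = a \<Longrightarrow> s = a + p - q" "t = b \<Longrightarrow> s = b + p - q"
    using assms(6) by simp_all
  ultimately show ?thesis
    using assms(1-5) unfolding block_shift_def by auto
qed

lemma finite_valid_coord: "finite {c. valid_coord n c}"
proof (rule finite_subset)
  show "{c. valid_coord n c} \<subseteq> case_prod Y ` ({..n} \<times> {..n}) \<union> case_prod Z ` ({..n} \<times> {..n})
      \<union> Zup ` {..n} \<union> Zdn ` {..n} \<union> {Zlast}"
  proof
    fix c assume "c \<in> {c. valid_coord n c}"
    then show "c \<in> case_prod Y ` ({..n} \<times> {..n}) \<union> case_prod Z ` ({..n} \<times> {..n})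
      \<union> Zup ` {..n} \<union> Zdn ` {..n} \<union> {Zlast}"
      by (cases c) (auto simp: valid_coord_def)
  qed
qed auto

lemma mem_tweaked_GT_iff:
  "x \<in> tweaked_GT n lam \<longleftrightarrow>
     (\<forall>c. \<not> valid_coord n c \<longrightarrow> x c = 0) \<and>
     (\<forall>i j. 1 \<le> i \<and> i \<le> n - 2 \<and> i \<le> j \<and> j \<le> n - 2 \<longrightarrow>
        x (Z i j) \<le> yv lam x i j \<and> yv lam x i (j + 1) \<le> x (Z i j) \<and>
        yv lam x (i + 1) (j + 1) \<le> x (Z i j) \<and>
        (i + 1 \<le> j \<longrightarrow> x (Z i j) \<le> yv lam x (i + 1) j)) \<and>
     (\<forall>i. 1 \<le> i \<and> i \<le> n - 2 \<longrightarrow>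
        block_ok (x (Zup i)) (x (Zdn i)) (yv lam x i n) (yv lam x (i + 1) n)
          (yv lam x i (n - 1)) (yv lam x (i + 1) (n - 1))) \<and>
     block_ok (x Zlast) (x Zlast) (yv lam x (n - 1) n) (yv lam x n n)
       (yv lam x (n - 1) (n - 1)) (yv lam x (n - 1) (n - 1))"
  unfolding tweaked_GT_def block_ok_def mem_Collect_eq
  by (simp only: diff_self conj_absorb) (auto simp del: max.bounded_iff)

lemma tweaked_GT_zero_outside:
  "x \<in> tweaked_GT n lam \<Longrightarrow> \<not> valid_coord n c \<Longrightarrow> x c = 0"
  unfolding tweaked_GT_def by blast

lemma not_vertex_if_two_sided_perturbation:
  assumes "(\<lambda>c. x c + e * d c) \<in> P" "(\<lambda>c. x c + (- e) * d c) \<in> P" "e \<noteq> 0" "d c \<noteq> 0"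
  shows "\<not> is_vertex P x"
proof -
  let ?a = "\<lambda>c. x c + (- e) * d c" and ?b = "\<lambda>c. x c + e * d c"
  have "?a c \<noteq> ?b c"
    using assms(3,4) by simp
  then have "?a \<noteq> ?b"
    by metis
  moreover have "x = (\<lambda>c. (1 - 1/2) * ?a c + 1/2 * ?b c)"
    by (auto simp: algebra_simps)
  ultimately have "\<exists>a\<in>P. \<exists>b\<in>P. a \<noteq> b \<and>
      (\<exists>t::real. 0 < t \<and> t < 1 \<and> x = (\<lambda>c. (1 - t) * a c + t * b c))"
    using assms(1,2) by (intro bexI[of _ ?a] bexI[of _ ?b] conjI exI[of _ "1/2"]) auto
  then show ?thesis
    unfolding is_vertex_def by blast
qed

text \<open>An off-lattice coordinate can be chosen among the y's or, if all y's lie in \<open>\<Gamma>(\<lambda>)\<close>, not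
  among the \<open>z\<^sup>\<down>\<close>'s: by (T2) each \<open>z\<^sup>\<down>\<close> differs from its \<open>z\<^sup>\<up>\<close> by a difference of y's.\<close>
lemma tweaked_GT_coord_off_lattice:
  assumes "2 \<le> n" "x \<in> tweaked_GT n lam" "valid_coord n c0" "x c0 \<notin> Gamma_lat n lam"
  obtains c where "valid_coord n c" "x c \<notin> Gamma_lat n lam"
    "(\<exists>i j. c = Y i j) \<or> (\<forall>i j. x (Y i j) \<in> Gamma_lat n lam) \<and> (\<forall>i. c \<noteq> Zdn i)"
proof (cases "\<exists>i j. x (Y i j) \<notin> Gamma_lat n lam")
  case True
  then obtain i j where "x (Y i j) \<notin> Gamma_lat n lam"
    by blast
  moreover then have "valid_coord n (Y i j)"
    using tweaked_GT_zero_outside[OF assms(2)] Gamma_lat_zero by force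
  ultimately show ?thesis
    using that by blast
next
  case False
  then have Y_in: "x (Y i j) \<in> Gamma_lat n lam" for i j
    by blast
  show ?thesis
  proof (cases "\<exists>i. c0 = Zdn i")
    case True
    then obtain i where c0: "c0 = Zdn i"
      by blast
    then have i: "1 \<le> i" "i \<le> n - 2"
      using assms(3) by (auto simp: valid_coord_def)
    have "yv lam x i (n - 1) - yv lam x (i + 1) (n - 1) \<in> Gamma_lat n lam"
      using assms(1) i Y_in Gamma_lat_lam[of "n - 1" n lam] unfolding yv_def
      by (auto intro: Gamma_lat_diff)
    moreover have "yv lam x i (n - 1) - yv lam x (i + 1) (n - 1) = x (Zup i) - x (Zdn i)"
      using assms(2) i unfolding mem_tweaked_GT_iff block_ok_def by blast
    ultimately have "x (Zup i) \<notin> Gamma_lat n lam"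
      using assms(4) c0 Gamma_lat_diff by fastforce
    moreover have "valid_coord n (Zup i)"
      using i by (simp add: valid_coord_def)
    ultimately show ?thesis
      using that Y_in by blast
  next
    case False
    then show ?thesis
      using that assms(3,4) Y_in by blast
  qed
qed

locale tweaked_GT_perturbation =
  fixes n :: nat and lam :: "nat \<Rightarrow> real" and x :: "coord \<Rightarrow> real" and r :: real
  assumes two_le_n: "2 \<le> n"
    and x_in: "x \<in> tweaked_GT n lam"
    and r_notin: "r \<notin> Gamma_lat n lam"
begin

abbreviation g :: "real \<Rightarrow> real" where
  "g \<equiv> pm_indicator r"

lemma g_uminus: "g (- u) = - g u"
  using r_notin Gamma_lat_zero by (metis pm_indicator_uminus)

lemma g_Gamma_lat: "u \<in> Gamma_lat n lam \<Longrightarrow> g u = 0"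
  using r_notin Gamma_lat_uminus[of u n lam] unfolding pm_indicator_def by auto

lemma yv_Gamma_lat:
  "(\<forall>i j. x (Y i j) \<in> Gamma_lat n lam) \<Longrightarrow> 1 \<le> j \<Longrightarrow> j \<le> n \<Longrightarrow>
    yv lam x i j \<in> Gamma_lat n lam"
  unfolding yv_def using Gamma_lat_lam by auto

definition up_shift :: "nat \<Rightarrow> real" where
  "up_shift i = block_shift g (x (Zup i)) (x (Zdn i)) (yv lam x i n) (yv lam x (i + 1) n)
     (yv lam x i (n - 1)) (yv lam x (i + 1) (n - 1))"

definition last_shift :: real where
  "last_shift = block_shift g (x Zlast) (x Zlast) (yv lam x (n - 1) n) (yv lam x n n)
     (yv lam x (n - 1) (n - 1)) (yv lam x (n - 1) (n - 1))"

definition shift :: "coord \<Rightarrow> real" where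
  "shift c = (case c of
      Y i j \<Rightarrow> g (x c)
    | Z i j \<Rightarrow> g (x c)
    | Zup i \<Rightarrow> if 1 \<le> i \<and> i \<le> n - 2 then up_shift i else 0
    | Zdn i \<Rightarrow> if 1 \<le> i \<and> i \<le> n - 2
        then up_shift i - g (yv lam x i (n - 1)) + g (yv lam x (i + 1) (n - 1)) else 0
    | Zlast \<Rightarrow> last_shift)"

definition perturbed :: "real \<Rightarrow> coord \<Rightarrow> real" where
  "perturbed e c = x c + e * shift c"

lemma shift_nonzero:
  assumes "valid_coord n c" "x c = r"
    and "(\<exists>i j. c = Y i j) \<or> (\<forall>i j. x (Y i j) \<in> Gamma_lat n lam) \<and> (\<forall>i. c \<noteq> Zdn i)"
  shows "shift c \<noteq> 0"
proof -
  have "g r = 1"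
    by (simp add: pm_indicator_def)
  show ?thesis
  proof (cases c)
    case (Zup i)
    then have i: "1 \<le> i" "i \<le> n - 2"
      using assms(1) by (auto simp: valid_coord_def)
    have eq: "yv lam x i (n - 1) - yv lam x (i + 1) (n - 1) = x (Zup i) - x (Zdn i)"
      using x_in i unfolding mem_tweaked_GT_iff block_ok_def by blast
    have Y_in: "\<forall>i j. x (Y i j) \<in> Gamma_lat n lam"
      using assms(3) Zup by blast
    have "up_shift i = g (x (Zup i))"
      unfolding up_shift_def
      by (rule block_shift_off_lattice)
        (use eq yv_Gamma_lat[OF Y_in] assms(2) Zup two_le_n r_notin in auto)
    then show ?thesis
      using Zup i assms(2) \<open>g r = 1\<close> by (simp add: shift_def)
  next
    case Zlast
    have Y_in: "\<forall>i j. x (Y i j) \<in> Gamma_lat n lam"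
      using assms(3) Zlast by blast
    have "last_shift = g (x Zlast)"
      unfolding last_shift_def
      by (rule block_shift_off_lattice)
        (use yv_Gamma_lat[OF Y_in] assms(2) Zlast two_le_n r_notin in auto)
    then show ?thesis
      using Zlast assms(2) \<open>g r = 1\<close> by (simp add: shift_def)
  qed (use assms \<open>g r = 1\<close> in \<open>auto simp: shift_def\<close>)
qed

definition vals :: "real set" where
  "vals = x ` {c. valid_coord n c} \<union> lam ` {1..n} \<union> {0}"

lemma finite_vals: "finite vals"
  unfolding vals_def using finite_valid_coord by simp

lemma zero_in_vals: "0 \<in> vals"
  unfolding vals_def by simp

lemma x_in_vals: "x c \<in> vals"
  using tweaked_GT_zero_outside[OF x_in, of c] unfolding vals_def
  by (cases "valid_coord n c") auto

lemma yv_in_vals: "i \<noteq> 1 \<or> 1 \<le> j \<and> j \<le> n \<Longrightarrow> yv lam x i j \<in> vals"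
  using x_in_vals unfolding yv_def vals_def by auto

lemma yv_perturbed:
  assumes "i \<noteq> 1 \<or> 1 \<le> j \<and> j \<le> n"
  shows "yv lam (perturbed e) i j = yv lam x i j + e * g (yv lam x i j)"
proof (cases "i = 1")
  case True
  then show ?thesis
    using assms Gamma_lat_lam g_Gamma_lat by (simp add: yv_def)
next
  case False
  then show ?thesis
    by (simp add: yv_def perturbed_def shift_def)
qed

context
  fixes \<delta> e :: real
  assumes gap: "sum3_gap \<delta> vals" and e_le: "\<bar>e\<bar> \<le> \<delta> / 20"
begin

lemma perturb_le:
  assumes "A \<in> vals" "B \<in> vals" "A \<le> B"
  shows "A + e * g A \<le> B + e * g B"
  using abs_pm_indicator_le[of r A] abs_pm_indicator_le[of r B]
  by (intro sum3_gap_perturb_le[OF gap assms(1,2) zero_in_vals assms(3)] e_le) auto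

lemma perturbed_zero_outside: "\<not> valid_coord n c \<Longrightarrow> perturbed e c = 0"
  using tweaked_GT_zero_outside[OF x_in, of c] g_Gamma_lat[OF Gamma_lat_zero]
  by (cases c) (auto simp: perturbed_def shift_def valid_coord_def)

lemma perturbed_T1:
  assumes "1 \<le> i" "i \<le> n - 2" "i \<le> j" "j \<le> n - 2"
  shows "perturbed e (Z i j) \<le> yv lam (perturbed e) i j \<and>
    yv lam (perturbed e) i (j + 1) \<le> perturbed e (Z i j) \<and>
    yv lam (perturbed e) (i + 1) (j + 1) \<le> perturbed e (Z i j) \<and>
    (i + 1 \<le> j \<longrightarrow> perturbed e (Z i j) \<le> yv lam (perturbed e) (i + 1) j)"
proof -
  have idx: "i \<noteq> 1 \<or> 1 \<le> j \<and> j \<le> n" "i \<noteq> 1 \<or> 1 \<le> j + 1 \<and> j + 1 \<le> n"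
    "i + 1 \<noteq> 1 \<or> 1 \<le> j + 1 \<and> j + 1 \<le> n" "i + 1 \<noteq> 1 \<or> 1 \<le> j \<and> j \<le> n"
    using assms by auto
  have "x (Z i j) \<le> yv lam x i j" "yv lam x i (j + 1) \<le> x (Z i j)"
    "yv lam x (i + 1) (j + 1) \<le> x (Z i j)" "i + 1 \<le> j \<Longrightarrow> x (Z i j) \<le> yv lam x (i + 1) j"
    using x_in assms unfolding mem_tweaked_GT_iff by blast+
  note le = this[THEN perturb_le[rotated 2]]
  have "perturbed e (Z i j) = x (Z i j) + e * g (x (Z i j))"
    by (simp add: perturbed_def shift_def)
  then show ?thesis
    unfolding yv_perturbed[OF idx(1)] yv_perturbed[OF idx(2)] yv_perturbed[OF idx(3)]
      yv_perturbed[OF idx(4)]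
    using le x_in_vals yv_in_vals[OF idx(1)] yv_in_vals[OF idx(2)] yv_in_vals[OF idx(3)]
      yv_in_vals[OF idx(4)] by simp
qed

lemma perturbed_block_up_down:
  assumes "1 \<le> i" "i \<le> n - 2"
  shows "block_ok (perturbed e (Zup i)) (perturbed e (Zdn i))
    (yv lam (perturbed e) i n) (yv lam (perturbed e) (i + 1) n)
    (yv lam (perturbed e) i (n - 1)) (yv lam (perturbed e) (i + 1) (n - 1))"
proof -
  have idx: "i \<noteq> 1 \<or> 1 \<le> n \<and> n \<le> n" "i + 1 \<noteq> 1 \<or> 1 \<le> n \<and> n \<le> n"
    "i \<noteq> 1 \<or> 1 \<le> n - 1 \<and> n - 1 \<le> n" "i + 1 \<noteq> 1 \<or> 1 \<le> n - 1 \<and> n - 1 \<le> n"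
    using two_le_n by auto
  have "block_ok (x (Zup i)) (x (Zdn i)) (yv lam x i n) (yv lam x (i + 1) n)
      (yv lam x i (n - 1)) (yv lam x (i + 1) (n - 1))"
    using x_in assms unfolding mem_tweaked_GT_iff by blast
  from block_ok_perturb[where g = g, OF gap x_in_vals[of "Zup i"] x_in_vals[of "Zdn i"]
      yv_in_vals[OF idx(1)] yv_in_vals[OF idx(2)] yv_in_vals[OF idx(3)] yv_in_vals[OF idx(4)]
      zero_in_vals this g_uminus abs_pm_indicator_le[of r] e_le]
  show ?thesis
    using assms unfolding yv_perturbed[OF idx(1)] yv_perturbed[OF idx(2)] yv_perturbed[OF idx(3)]
      yv_perturbed[OF idx(4)]
    by (simp add: perturbed_def shift_def up_shift_def)
qed

lemma perturbed_block_last: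
  "block_ok (perturbed e Zlast) (perturbed e Zlast) (yv lam (perturbed e) (n - 1) n)
    (yv lam (perturbed e) n n) (yv lam (perturbed e) (n - 1) (n - 1))
    (yv lam (perturbed e) (n - 1) (n - 1))"
proof -
  have idx: "n - 1 \<noteq> 1 \<or> 1 \<le> n \<and> n \<le> n" "n \<noteq> 1 \<or> 1 \<le> n \<and> n \<le> n"
    "n - 1 \<noteq> 1 \<or> 1 \<le> n - 1 \<and> n - 1 \<le> n"
    using two_le_n by auto
  have "block_ok (x Zlast) (x Zlast) (yv lam x (n - 1) n) (yv lam x n n)
      (yv lam x (n - 1) (n - 1)) (yv lam x (n - 1) (n - 1))"
    using x_in unfolding mem_tweaked_GT_iff by blast
  from block_ok_perturb[where g = g, OF gap x_in_vals[of Zlast] x_in_vals[of Zlast]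
      yv_in_vals[OF idx(1)] yv_in_vals[OF idx(2)] yv_in_vals[OF idx(3)] yv_in_vals[OF idx(3)]
      zero_in_vals this g_uminus abs_pm_indicator_le[of r] e_le]
  show ?thesis
    unfolding yv_perturbed[OF idx(1)] yv_perturbed[OF idx(2)] yv_perturbed[OF idx(3)]
    by (simp add: perturbed_def shift_def last_shift_def)
qed

lemma perturbed_in_tweaked_GT: "perturbed e \<in> tweaked_GT n lam"
  unfolding mem_tweaked_GT_iff
  using perturbed_zero_outside perturbed_T1 perturbed_block_up_down perturbed_block_last by blast

end

lemma small_perturbations_in_tweaked_GT:
  "\<exists>\<delta>>0. \<forall>e. \<bar>e\<bar> \<le> \<delta> \<longrightarrow> perturbed e \<in> tweaked_GT n lam"
proof -
  obtain \<delta> where "\<delta> > 0" "sum3_gap \<delta> vals"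
    using sum3_gap_exists[OF finite_vals] by blast
  then show ?thesis
    using perturbed_in_tweaked_GT by (intro exI[of _ "\<delta> / 20"]) auto
qed

end

theorem theorem7p8:
  fixes n :: nat and lam :: "nat \<Rightarrow> real" and x :: "coord \<Rightarrow> real"
  assumes "n \<ge> 2"
    and "is_vertex (tweaked_GT n lam) x"
  shows "\<forall>c. valid_coord n c \<longrightarrow> x c \<in> Gamma_lat n lam"
proof (rule ccontr)
  assume "\<not> ?thesis"
  then obtain c0 where "valid_coord n c0" "x c0 \<notin> Gamma_lat n lam"
    by blast
  moreover have x_in: "x \<in> tweaked_GT n lam"
    using assms(2) unfolding is_vertex_def by blast
  ultimately obtain c where c: "valid_coord n c" "x c \<notin> Gamma_lat n lam"
    "(\<exists>i j. c = Y i j) \<or> (\<forall>i j. x (Y i j) \<in> Gamma_lat n lam) \<and> (\<forall>i. c \<noteq> Zdn i)"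
    using tweaked_GT_coord_off_lattice assms(1) by blast
  interpret tweaked_GT_perturbation n lam x "x c"
    using assms(1) x_in c(2) by unfold_locales
  obtain \<delta> where "\<delta> > 0" "\<forall>e. \<bar>e\<bar> \<le> \<delta> \<longrightarrow> perturbed e \<in> tweaked_GT n lam"
    using small_perturbations_in_tweaked_GT by blast
  then have "perturbed \<delta> \<in> tweaked_GT n lam" "perturbed (- \<delta>) \<in> tweaked_GT n lam"
    by auto
  moreover have "shift c \<noteq> 0"
    using shift_nonzero c by blast
  ultimately show False
    using not_vertex_if_two_sided_perturbation[of x \<delta> shift] assms(2) \<open>\<delta> > 0\<close>
    unfolding perturbed_def[abs_def] by auto
qed

end
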